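(* Let $X$ be a compact metric space, $T:X\to X$ continuous, and $\mu$ a $T$-invariant ergodic Borel probability measure on $X$. Let $\alpha=\{A_1,\dots,A_m\}$ be a finite measurable partition of $X$ and let $Z$ be a coarsely optimal compression algorithm. Then for $\mu$-almost every $x\in X$, \[ K_Z(x,\alpha)=h_\mu(T,\alpha), \] where $h_\mu(T,\alpha)$ is the metric (Kolmogorov–Sinai) entropy of $T$ with respect to the partition $\alpha$.
   Context: All logarithms and entropies are in base 2. For a finite measurable partition $\alpha=\{A_1,\dots,A_m\}$ of $X$, the symbolic orbit of $x\in X$ is $\Phi_\alpha(x)=\omega\in\{1,\dots,m\}^{\mathbb{N}}$ defined by $T^j(x)\in A_{\omega_j}$ for all $j$. For $\omega$ an infinite string, $\omega^n$ denotes its first $n$ symbols. A compression algorithm is a total recursive injective (lossless) map $Z$ from finite strings over the alphabet $\{1,\dots,m\}$ to finite binary strings; $K_Z(\omega)=\limsup_{n\to\infty}|Z(\omega^n)|/n$ and $K_Z(x,\alpha)=K_Z(\Phi_\alpha(x))$. Empirical entropy: for a string $s$ of length $n$ and word $w$ of length $l\le n$, $P(s,w)=\frac{1}{n-l+1}\#\{0\le i\le n-l: (s_{i+1},\dots,s_{i+l})=w\}$, $\hat H_l(s)=-\frac1l\sum_{w}P(s,w)\log P(s,w)$ (sum over all words of length $l$, $0\log0=0$). $Z$ is coarsely optimal if for every $k\ge1$ there is $f_k$ with $f_k(n)=o(n)$ such that $|Z(s)|\le|s|\hat H_k(s)+f_k(|s|)$ for every finite string $s$. *)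

theory Defs
  imports "HOL-Probability.Probability" "HOL-Library.Landau_Symbols"
begin

(* Finite strings over the alphabet {1..m} are lists of naturals with entries in {1..m};
   infinite strings are functions nat => nat; binary strings are bool lists. *)

definition strings_over :: "nat \<Rightarrow> nat list set" where
  "strings_over m = {s. set s \<subseteq> {1..m}}"

definition prefix_of :: "(nat \<Rightarrow> nat) \<Rightarrow> nat \<Rightarrow> nat list" where
  "prefix_of \<omega> n = map \<omega> [0..<n]"

definition invariant_measure :: "'a measure \<Rightarrow> ('a \<Rightarrow> 'a) \<Rightarrow> bool" where
  "invariant_measure M T \<longleftrightarrow> T \<in> M \<rightarrow>\<^sub>M M \<and>
     (\<forall>A\<in>sets M. emeasure M (T -` A \<inter> space M) = emeasure M A)"

definition ergodic :: "'a measure \<Rightarrow> ('a \<Rightarrow> 'a) \<Rightarrow> bool" where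
  "ergodic M T \<longleftrightarrow> (\<forall>A\<in>sets M. T -` A \<inter> space M = A \<longrightarrow>
      measure M A = 0 \<or> measure M A = 1)"

definition measurable_partition :: "'a measure \<Rightarrow> nat \<Rightarrow> (nat \<Rightarrow> 'a set) \<Rightarrow> bool" where
  "measurable_partition M m A \<longleftrightarrow> (\<forall>i\<in>{1..m}. A i \<in> sets M) \<and>
      disjoint_family_on A {1..m} \<and> (\<Union>i\<in>{1..m}. A i) = space M"

definition sym_orbit :: "nat \<Rightarrow> (nat \<Rightarrow> 'a set) \<Rightarrow> ('a \<Rightarrow> 'a) \<Rightarrow> 'a \<Rightarrow> nat \<Rightarrow> nat" where
  "sym_orbit m A T x j = (THE i. i \<in> {1..m} \<and> (T ^^ j) x \<in> A i)"

definition K_Z :: "(nat list \<Rightarrow> bool list) \<Rightarrow> (nat \<Rightarrow> nat) \<Rightarrow> ereal" where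
  "K_Z Z \<omega> = limsup (\<lambda>n. ereal (real (length (Z (prefix_of \<omega> n))) / real n))"

definition K_Z_point :: "(nat list \<Rightarrow> bool list) \<Rightarrow> nat \<Rightarrow> (nat \<Rightarrow> 'a set) \<Rightarrow> ('a \<Rightarrow> 'a) \<Rightarrow> 'a \<Rightarrow> ereal" where
  "K_Z_point Z m A T x = K_Z Z (sym_orbit m A T x)"

definition emp_freq :: "nat list \<Rightarrow> nat list \<Rightarrow> real" where
  "emp_freq s w = real (card {i. i \<le> length s - length w \<and> take (length w) (drop i s) = w})
                  / real (length s - length w + 1)"

(* empirical entropy hat H_l(s), sum over all words of length l over {1..m} (0 log 0 = 0) *)
definition emp_entropy :: "nat \<Rightarrow> nat \<Rightarrow> nat list \<Rightarrow> real" where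
  "emp_entropy m l s = - (1 / real l) *
     (\<Sum>w\<in>{w. w \<in> strings_over m \<and> length w = l}. emp_freq s w * log 2 (emp_freq s w))"

(* lossless compression algorithm on strings over {1..m} (recursiveness not modelled) *)
definition compression_algorithm :: "nat \<Rightarrow> (nat list \<Rightarrow> bool list) \<Rightarrow> bool" where
  "compression_algorithm m Z \<longleftrightarrow> inj_on Z (strings_over m)"

definition coarsely_optimal :: "nat \<Rightarrow> (nat list \<Rightarrow> bool list) \<Rightarrow> bool" where
  "coarsely_optimal m Z \<longleftrightarrow> (\<forall>k\<ge>1. \<exists>f :: nat \<Rightarrow> real. f \<in> o(\<lambda>n. real n) \<and>
      (\<forall>s\<in>strings_over m. real (length (Z s)) \<le> real (length s) * emp_entropy m k s + f (length s)))"

(* cylinder of the join alpha v T^-1 alpha v ... v T^-(n-1) alpha indexed by word w *)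
definition cylinder :: "(nat \<Rightarrow> 'a set) \<Rightarrow> ('a \<Rightarrow> 'a) \<Rightarrow> nat list \<Rightarrow> 'a set" where
  "cylinder A T w = {x. \<forall>j<length w. (T ^^ j) x \<in> A (w ! j)}"

(* H_mu of the n-fold join, base 2, 0 log 0 = 0 *)
definition join_entropy :: "'a measure \<Rightarrow> nat \<Rightarrow> (nat \<Rightarrow> 'a set) \<Rightarrow> ('a \<Rightarrow> 'a) \<Rightarrow> nat \<Rightarrow> real" where
  "join_entropy M m A T n = - (\<Sum>w\<in>{w. w \<in> strings_over m \<and> length w = n}.
      measure M (cylinder A T w \<inter> space M) * log 2 (measure M (cylinder A T w \<inter> space M)))"

definition metric_entropy :: "'a measure \<Rightarrow> nat \<Rightarrow> (nat \<Rightarrow> 'a set) \<Rightarrow> ('a \<Rightarrow> 'a) \<Rightarrow> real" where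
  "metric_entropy M m A T = lim (\<lambda>n. join_entropy M m A T n / real n)"

end

theory Submission
  imports Defs "HOL-Real_Asymp.Real_Asymp"
begin

text \<open>
  Upper bound: by Birkhoff's theorem applied to cylinder sets, along almost every symbolic
  orbit the empirical frequency of each word \<open>w\<close> of length \<open>k\<close> tends to \<open>\<mu>[w]\<close>, so the
  empirical \<open>k\<close>-block entropy tends to \<open>H\<^sub>k / k\<close> and coarse optimality gives \<open>K\<^sub>Z \<le> H\<^sub>k / k\<close>
  for every \<open>k\<close>; by subadditivity of \<open>H\<^sub>n\<close> (Fekete), \<open>H\<^sub>k / k\<close> tends to \<open>h\<^sub>\<mu>(T, \<alpha>)\<close>.
  Birkhoff's theorem for indicator functions follows from the Katznelson--Weiss covering
  argument.

  Lower bound: let \<open>C\<^sub>n(x)\<close> be the \<open>n\<close>-cylinder containing \<open>x\<close>. Since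
  \<open>\<mu>(C\<^sub>n\<^sub>+\<^sub>1(x)) \<le> \<mu>(C\<^sub>n(T x))\<close>, the set of points with \<open>limsup\<^sub>n -log \<mu>(C\<^sub>n(x)) / n \<ge> t\<close>
  is backward invariant, hence null or conull. If it were null for some \<open>t < h\<close>, most of the
  mass of the \<open>n\<close>-cylinders would sit on at most \<open>2^(t n)\<close> of them and \<open>H\<^sub>n \<le> t n + o(n)\<close>,
  forcing \<open>h \<le> t\<close>. Now let \<open>a < b < h\<close>. As \<open>Z\<close> is injective, at most \<open>2^(a n + 1)\<close> words
  have codes of length \<open>\<le> a n\<close>, and those with cylinder measure \<open>\<le> 2^(-b n)\<close> carry total
  mass \<open>\<le> 2^((a - b) n + 1)\<close>. By Borel--Cantelli almost every \<open>x\<close> eventually avoids them,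
  while its own cylinder measure drops below \<open>2^(-b n)\<close> infinitely often; so \<open>K\<^sub>Z \<ge> a\<close>
  almost everywhere.
\<close>

section \<open>Entropy inequalities and Fekete's lemma\<close>

lemma neg_mult_log_nonneg:
  fixes p :: real
  assumes "0 \<le> p" and "p \<le> 1"
  shows "0 \<le> - (p * log 2 p)"
proof (cases "p = 0")
  case False
  with assms have "log 2 p \<le> 0" by simp
  with assms show ?thesis by (simp add: mult_nonneg_nonpos)
qed simp

lemma neg_sum_mult_log_le:
  fixes p :: "'b \<Rightarrow> real"
  assumes W: "finite W" and p: "\<And>w. w \<in> W \<Longrightarrow> 0 \<le> p w" and K: "real (card W) \<le> K"
  shows "- (\<Sum>w\<in>W. p w * log 2 (p w)) \<le> (\<Sum>w\<in>W. p w) * log 2 K + 1 / ln 2"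
proof (cases "W = {}")
  case False
  define N where "N = real (card W)"
  have N: "0 < N" using W False by (simp add: N_def card_gt_0_iff)
  have summand: "- p w * ln (p w) \<le> p w * ln N + 1 / N" if "w \<in> W" for w
  proof (cases "p w = 0")
    case False
    then have pw: "0 < p w" using p[OF that] by simp
    have "ln (1 / (p w * N)) \<le> 1 / (p w * N) - 1"
      using pw N by (intro ln_le_minus_one) simp
    moreover have "ln (1 / (p w * N)) = - ln (p w) - ln N"
      using pw N by (simp add: ln_div ln_mult)
    ultimately have "p w * (- ln (p w) - ln N) \<le> p w * (1 / (p w * N) - 1)"
      using pw by (intro mult_left_mono) auto
    then show ?thesis using pw N by (simp add: algebra_simps)
  qed (use N in simp)
  have "- (\<Sum>w\<in>W. p w * ln (p w)) = (\<Sum>w\<in>W. - p w * ln (p w))"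
    by (simp add: sum_negf)
  also have "\<dots> \<le> (\<Sum>w\<in>W. p w * ln N + 1 / N)"
    by (intro sum_mono summand)
  also have "\<dots> = (\<Sum>w\<in>W. p w) * ln N + 1"
    using N by (simp add: N_def sum.distrib sum_distrib_right)
  also have "\<dots> \<le> (\<Sum>w\<in>W. p w) * ln K + 1"
    using N K p by (intro add_right_mono mult_left_mono sum_nonneg) (auto simp: N_def)
  finally have "- (\<Sum>w\<in>W. p w * ln (p w)) / ln 2 \<le> ((\<Sum>w\<in>W. p w) * ln K + 1) / ln 2"
    by (rule divide_right_mono) simp_all
  then show ?thesis
    by (simp add: log_def sum_divide_distrib add_divide_distrib)
qed simp

text \<open>Gibbs' inequality against the product of the marginals.\<close>

lemma entropy_joint_le_marginals:
  fixes q :: "'u \<Rightarrow> 'v \<Rightarrow> real" and a :: "'u \<Rightarrow> real" and b :: "'v \<Rightarrow> real"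
  assumes U: "finite U" and V: "finite V"
    and q: "\<And>u v. u \<in> U \<Longrightarrow> v \<in> V \<Longrightarrow> 0 \<le> q u v"
    and a: "\<And>u. u \<in> U \<Longrightarrow> a u = (\<Sum>v\<in>V. q u v)"
    and b: "\<And>v. v \<in> V \<Longrightarrow> b v = (\<Sum>u\<in>U. q u v)"
    and total: "(\<Sum>u\<in>U. a u) = 1"
  shows "- (\<Sum>u\<in>U. \<Sum>v\<in>V. q u v * ln (q u v))
           \<le> - (\<Sum>u\<in>U. a u * ln (a u)) - (\<Sum>v\<in>V. b v * ln (b v))"
proof -
  have summand: "- q u v * ln (q u v) \<le> - q u v * ln (a u) - q u v * ln (b v) + a u * b v - q u v"
    if u: "u \<in> U" and v: "v \<in> V" for u v
  proof (cases "q u v = 0")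
    case True
    have "0 \<le> a u" "0 \<le> b v" using a[OF u] b[OF v] U V q u v by (auto intro: sum_nonneg)
    with True show ?thesis by simp
  next
    case False
    then have qp: "0 < q u v" using q[OF u v] by linarith
    have "q u v \<le> a u" unfolding a[OF u] using V v q u by (intro member_le_sum) auto
    then have ap: "0 < a u" using qp by simp
    have "q u v \<le> b v" unfolding b[OF v] using U u q v by (intro member_le_sum) auto
    then have bp: "0 < b v" using qp by simp
    have "ln (a u * b v / q u v) \<le> a u * b v / q u v - 1"
      using ap bp qp by (intro ln_le_minus_one) simp
    moreover have "ln (a u * b v / q u v) = ln (a u) + ln (b v) - ln (q u v)"
      using ap bp qp by (simp add: ln_div ln_mult)
    ultimately have "q u v * (ln (a u) + ln (b v) - ln (q u v)) \<le> q u v * (a u * b v / q u v - 1)"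
      using qp by (intro mult_left_mono) auto
    then show ?thesis using qp by (simp add: algebra_simps)
  qed
  have sum_b: "(\<Sum>v\<in>V. b v) = 1"
    using a b total by (simp add: sum.swap[of _ V U])
  have "- (\<Sum>u\<in>U. \<Sum>v\<in>V. q u v * ln (q u v)) = (\<Sum>u\<in>U. \<Sum>v\<in>V. - q u v * ln (q u v))"
    by (simp add: sum_negf)
  also have "\<dots> \<le> (\<Sum>u\<in>U. \<Sum>v\<in>V. - q u v * ln (a u) - q u v * ln (b v) + a u * b v - q u v)"
    by (intro sum_mono summand)
  also have "\<dots> = - (\<Sum>u\<in>U. (\<Sum>v\<in>V. q u v) * ln (a u)) - (\<Sum>v\<in>V. (\<Sum>u\<in>U. q u v) * ln (b v))
      + (\<Sum>u\<in>U. a u) * (\<Sum>v\<in>V. b v) - (\<Sum>u\<in>U. \<Sum>v\<in>V. q u v)"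
    by (simp add: sum.distrib sum_subtractf sum_negf sum_distrib_left sum_distrib_right
        sum.swap[of _ V U] algebra_simps)
  also have "\<dots> = - (\<Sum>u\<in>U. a u * ln (a u)) - (\<Sum>v\<in>V. b v * ln (b v))"
    using a b total sum_b by simp
  finally show ?thesis .
qed

lemma tendsto_mult_log2:
  fixes a :: "nat \<Rightarrow> real"
  assumes nonneg: "\<And>n. 0 \<le> a n" and lim: "a \<longlonglongrightarrow> L"
  shows "(\<lambda>n. a n * log 2 (a n)) \<longlonglongrightarrow> L * log 2 L"
proof (cases "L = 0")
  case True
  have "((\<lambda>y::real. y * log 2 y) \<longlongrightarrow> 0) (at_right 0)"
    unfolding log_def by real_asymp
  then have "continuous (at 0 within {0..}) (\<lambda>y::real. y * log 2 y)"
    unfolding continuous_within at_within_Ici_at_right by simp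
  from continuous_within_tendsto_compose'[OF this _ lim[unfolded True]] nonneg True
  show ?thesis by simp
next
  case False
  moreover have "0 \<le> L" using lim by (rule LIMSEQ_le_const) (use nonneg in auto)
  ultimately show ?thesis by (intro tendsto_intros lim) auto
qed

lemma subadditive_div_le:
  fixes a :: "nat \<Rightarrow> real"
  assumes sub: "\<And>n k. a (n + k) \<le> a n + a k" and nonneg: "\<And>n. 0 \<le> a n"
    and k: "1 \<le> k" and n: "1 \<le> n"
  shows "a n / real n \<le> a k / real k + (\<Sum>r<k. a r) / real n"
proof -
  have mult: "a (q * k + r) \<le> real q * a k + a r" for q r
  proof (induction q)
    case (Suc q)
    have "a (Suc q * k + r) \<le> a k + a (q * k + r)"
      using sub[of k "q * k + r"] by (simp add: algebra_simps)
    with Suc show ?case by (simp add: algebra_simps)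
  qed simp
  define q r where "q = n div k" and "r = n mod k"
  have "r < k" using k by (simp add: r_def)
  then have "a r \<le> (\<Sum>r<k. a r)" using nonneg by (intro member_le_sum) auto
  moreover have "real q * real k \<le> real n"
    by (simp add: q_def flip: of_nat_mult)
  then have "real q * a k \<le> real n * (a k / real k)"
    using k nonneg[of k] mult_right_mono[of "real q * real k" "real n" "a k / real k"] by simp
  ultimately have "a n \<le> real n * (a k / real k) + (\<Sum>r<k. a r)"
    using mult[of q r] by (simp add: q_def r_def)
  then show ?thesis using n by (simp add: field_simps)
qed

lemma fekete_subadditive:
  fixes a :: "nat \<Rightarrow> real"
  assumes sub: "\<And>n k. a (n + k) \<le> a n + a k" and nonneg: "\<And>n. 0 \<le> a n"
  shows "(\<lambda>n. a n / real n) \<longlonglongrightarrow> (INF n\<in>{1..}. a n / real n)"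
proof -
  have bdd: "bdd_below ((\<lambda>n. a n / real n) ` {1..})"
    using nonneg by (intro bdd_belowI[of _ 0]) auto
  show ?thesis
  proof (rule order_tendstoI)
    fix y assume "y < (INF n\<in>{1..}. a n / real n)"
    then have "y < a n / real n" if "1 \<le> n" for n
      using cINF_lower[OF bdd, of n] that by simp
    then show "\<forall>\<^sub>F n in sequentially. y < a n / real n"
      by (rule eventually_sequentiallyI[of 1])
  next
    fix y assume "(INF n\<in>{1..}. a n / real n) < y"
    then obtain k where k: "1 \<le> k" "a k / real k < y"
      by (subst (asm) cINF_less_iff[OF _ bdd]) auto
    have "(\<lambda>n. a k / real k + (\<Sum>r<k. a r) / real n) \<longlonglongrightarrow> a k / real k + 0"
      by (intro tendsto_add tendsto_const lim_const_over_n)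
    then have "\<forall>\<^sub>F n in sequentially. a k / real k + (\<Sum>r<k. a r) / real n < y"
      using k(2) by (intro order_tendstoD(2)) auto
    with eventually_ge_at_top[of 1] show "\<forall>\<^sub>F n in sequentially. a n / real n < y"
      by eventually_elim (use subadditive_div_le[OF sub nonneg k(1)] in fastforce)
  qed
qed

lemma le_of_le_add_const_over_n:
  fixes a b c :: real
  assumes "\<And>n. N \<le> n \<Longrightarrow> a \<le> b + c / real n"
  shows "a \<le> b"
proof -
  have "(\<lambda>n. b + c / real n) \<longlonglongrightarrow> b + 0"
    by (intro tendsto_add tendsto_const lim_const_over_n)
  then show ?thesis
    by (intro LIMSEQ_le_const[of _ b]) (use assms in auto)
qed

section \<open>Words, codes and cylinders\<close>

lemma card_bool_lists_length_le: "card {xs :: bool list. length xs \<le> K} \<le> 2 ^ (K + 1)"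
proof -
  have "card {xs :: bool list. length xs \<le> K} = (\<Sum>i\<le>K. 2 ^ i)"
    using card_lists_length_le[of "UNIV :: bool set" K] by simp
  also have "\<dots> \<le> 2 ^ (K + 1)"
    by (induction K) auto
  finally show ?thesis .
qed

lemma length_prefix_of[simp]: "length (prefix_of \<omega> n) = n"
  by (simp add: prefix_of_def)

lemma nth_prefix_of[simp]: "j < n \<Longrightarrow> prefix_of \<omega> n ! j = \<omega> j"
  by (simp add: prefix_of_def)

lemma prefix_of_Suc: "prefix_of \<omega> (Suc n) = \<omega> 0 # prefix_of (\<lambda>j. \<omega> (Suc j)) n"
  by (simp add: prefix_of_def upt_conv_Cons map_Suc_upt[symmetric] del: upt_Suc)

lemma take_drop_prefix_of:
  "i + k \<le> n \<Longrightarrow> take k (drop i (prefix_of \<omega> n)) = prefix_of (\<lambda>j. \<omega> (i + j)) k"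
  by (intro nth_equalityI) (auto simp: prefix_of_def)

lemma K_Z_nonneg: "0 \<le> K_Z Z \<omega>"
  unfolding K_Z_def by (intro le_Limsup) (auto simp: zero_ereal_def)

lemma cylinder_Nil[simp]: "cylinder A T [] = UNIV"
  by (simp add: cylinder_def)

lemma cylinder_Cons: "cylinder A T (a # w) = A a \<inter> T -` cylinder A T w"
  by (auto simp: cylinder_def All_less_Suc2 funpow_swap1)

lemma cylinder_append:
  "cylinder A T (u @ v) = cylinder A T u \<inter> (T ^^ length u) -` cylinder A T v"
  by (induction u) (auto simp: cylinder_Cons funpow_swap1)

lemma card_le_if_inj_on_short_codes:
  fixes Z :: "'b \<Rightarrow> bool list"
  assumes inj: "inj_on Z W" and short: "\<And>w. w \<in> W \<Longrightarrow> real (length (Z w)) \<le> r" and r: "0 \<le> r"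
  shows "real (card W) \<le> 2 * 2 powr r"
proof -
  define K where "K = nat \<lfloor>r\<rfloor>"
  have "Z ` W \<subseteq> {xs. length xs \<le> K}"
    using short by (auto simp: K_def intro: le_nat_floor)
  then have "card (Z ` W) \<le> card {xs :: bool list. length xs \<le> K}"
    by (intro card_mono) (simp_all add: finite_lists_length_le[of UNIV, simplified])
  also have "\<dots> \<le> 2 ^ (K + 1)" by (rule card_bool_lists_length_le)
  finally have card: "card W \<le> 2 * 2 ^ K"
    using card_image[OF inj] by simp
  have "real (card W) \<le> 2 * 2 ^ K"
    using of_nat_mono[OF card, where 'a = real] by simp
  also have "(2::real) ^ K \<le> 2 powr r"
    unfolding K_def using r by (simp add: powr_realpow[symmetric] of_nat_floor)
  finally show ?thesis by simp
qed

section \<open>Birkhoff's ergodic theorem for indicator functions\<close>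

locale ergodic_transformation = prob_space M for M :: "'a measure" +
  fixes T :: "'a \<Rightarrow> 'a"
  assumes space_eq_UNIV: "space M = UNIV"
    and invariant: "invariant_measure M T"
    and ergodic: "ergodic M T"
begin

lemma Collect_in_sets: "{x \<in> space M. P x} \<in> sets M \<Longrightarrow> Collect P \<in> sets M"
  by (simp add: space_eq_UNIV)

lemma UNIV_in_sets[simp]: "UNIV \<in> sets M"
  using sets.top[of M] by (simp add: space_eq_UNIV)

lemma measurable_T[measurable]: "T \<in> M \<rightarrow>\<^sub>M M"
  using invariant by (simp add: invariant_measure_def)

lemma measurable_funpow_T[measurable]: "T ^^ n \<in> M \<rightarrow>\<^sub>M M"
  by (induction n) (auto intro: measurable_comp)

lemma vimage_funpow_in_sets: "S \<in> sets M \<Longrightarrow> (T ^^ n) -` S \<in> sets M"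
  using measurable_sets[OF measurable_funpow_T] by (simp add: space_eq_UNIV)

lemma vimage_T_in_sets: "S \<in> sets M \<Longrightarrow> T -` S \<in> sets M"
  using vimage_funpow_in_sets[of S 1] by simp

lemma prob_vimage_T: "S \<in> sets M \<Longrightarrow> prob (T -` S) = prob S"
  using invariant by (simp add: invariant_measure_def measure_def space_eq_UNIV)

lemma prob_vimage_funpow: "S \<in> sets M \<Longrightarrow> prob ((T ^^ n) -` S) = prob S"
proof (induction n arbitrary: S)
  case (Suc n)
  have S': "T -` S \<in> sets M" using Suc.prems by (rule vimage_T_in_sets)
  have "prob ((T ^^ Suc n) -` S) = prob ((T ^^ n) -` (T -` S))"
    by (simp only: funpow.simps vimage_comp)
  also have "\<dots> = prob S"
    using Suc.IH[OF S'] prob_vimage_T[OF Suc.prems] by simp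
  finally show ?case .
qed simp

text \<open>The intersection of the decreasing preimages \<open>T\<^sup>-\<^sup>n R\<close> is strictly invariant and has the
  measure of \<open>R\<close>.\<close>

lemma backward_invariant_prob_0_or_1:
  assumes R: "R \<in> sets M" and backward: "\<And>x. T x \<in> R \<Longrightarrow> x \<in> R"
  shows "prob R = 0 \<or> prob R = 1"
proof -
  define R' where "R' = (\<Inter>n. (T ^^ n) -` R)"
  have "decseq (\<lambda>n. (T ^^ n) -` R)"
    using backward by (intro decseq_SucI) auto
  then have "(\<lambda>n. prob ((T ^^ n) -` R)) \<longlonglongrightarrow> prob R'"
    unfolding R'_def by (intro finite_Lim_measure_decseq) (auto intro: vimage_funpow_in_sets R)
  then have "prob R' = prob R"
    by (simp add: prob_vimage_funpow[OF R] LIMSEQ_const_iff)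
  moreover have "T -` R' = R'"
  proof (intro set_eqI iffI)
    fix x assume "x \<in> T -` R'"
    then have Suc: "(T ^^ Suc n) x \<in> R" for n by (auto simp: R'_def funpow_swap1)
    have "(T ^^ n) x \<in> R" for n
      using Suc[of 0] Suc[of "n - 1"] backward[of x] by (cases n) auto
    then show "x \<in> R'" by (simp add: R'_def)
  next
    fix x assume "x \<in> R'"
    then have "(T ^^ Suc n) x \<in> R" for n by (simp add: R'_def del: funpow.simps)
    then show "x \<in> T -` R'" by (simp add: R'_def funpow_swap1)
  qed
  moreover have "R' \<in> sets M"
    unfolding R'_def using vimage_funpow_in_sets[OF R] by (intro sets.countable_INT) auto
  ultimately show ?thesis using ergodic by (auto simp: ergodic_def space_eq_UNIV)
qed

definition visits :: "'a set \<Rightarrow> nat \<Rightarrow> 'a \<Rightarrow> real" where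
  "visits B n x = (\<Sum>j<n. indicator B ((T ^^ j) x))"

lemma visits_add: "visits B (k + n) x = visits B k x + visits B n ((T ^^ k) x)"
proof (induction n)
  case (Suc n)
  have "(T ^^ (k + n)) x = (T ^^ n) ((T ^^ k) x)"
    by (metis add.commute comp_apply funpow_add)
  with Suc show ?case by (simp add: visits_def)
qed (simp add: visits_def)

lemma visits_Suc: "visits B (Suc n) x = indicator B x + visits B n (T x)"
  using visits_add[of B 1 n x] by (simp add: visits_def)

lemma visits_nonneg: "0 \<le> visits B n x"
  by (simp add: visits_def sum_nonneg)

lemma visits_le: "visits B n x \<le> real n"
  using sum_mono[of "{..<n}" "\<lambda>j. indicator B ((T ^^ j) x)" "\<lambda>_. 1 :: real"]
  by (simp add: visits_def indicator_le_1)

lemma visits_Compl: "visits (- B) n x = real n - visits B n x"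
proof -
  have "visits (- B) n x = (\<Sum>j<n. 1 - indicator B ((T ^^ j) x))"
    unfolding visits_def by (intro sum.cong refl) (simp add: indicator_def)
  then show ?thesis by (simp add: visits_def sum_subtractf)
qed

lemma visits_eq_card: "visits B n x = real (card {j. j < n \<and> (T ^^ j) x \<in> B})"
proof -
  have "real (card {j \<in> {..<n}. (T ^^ j) x \<in> B}) = (\<Sum>j\<in>{j \<in> {..<n}. (T ^^ j) x \<in> B}. 1)"
    by simp
  also have "\<dots> = (\<Sum>j\<in>{..<n}. if (T ^^ j) x \<in> B then 1 else 0)"
    by (rule sum.inter_filter) simp
  also have "\<dots> = visits B n x"
    unfolding visits_def by (intro sum.cong refl) (simp add: indicator_def)
  also have "{j \<in> {..<n}. (T ^^ j) x \<in> B} = {j. j < n \<and> (T ^^ j) x \<in> B}"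
    by auto
  finally show ?thesis by simp
qed

lemma borel_measurable_visits:
  assumes [measurable]: "B \<in> sets M"
  shows "visits B n \<in> borel_measurable M"
  unfolding visits_def by measurable

lemma integrable_visits: "B \<in> sets M \<Longrightarrow> integrable M (visits B n)"
  by (intro integrable_const_bound[where B = "real n"] borel_measurable_visits)
     (auto simp: visits_le visits_nonneg)

lemma integral_visits:
  assumes B: "B \<in> sets M"
  shows "integral\<^sup>L M (visits B n) = real n * prob B"
proof -
  have "integral\<^sup>L M (visits B n) = (\<Sum>j<n. integral\<^sup>L M (indicator ((T ^^ j) -` B)))"
    unfolding visits_def indicator_vimage[symmetric]
    by (intro Bochner_Integration.integral_sum)
       (auto simp: emeasure_eq_measure vimage_funpow_in_sets B intro!: integrable_real_indicator)
  also have "\<dots> = (\<Sum>j<n. prob B)"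
    by (simp add: vimage_funpow_in_sets B prob_vimage_funpow)
  finally show ?thesis by simp
qed

text \<open>Katznelson--Weiss covering: walk along the orbit, jumping from a point outside \<open>E\<close> to the
  end of a block of length at most \<open>N\<close> on which the frequency of \<open>B\<close> exceeds \<open>t\<close>, and
  stepping over points of \<open>E\<close> one at a time.\<close>

lemma visits_covering_bound:
  assumes t: "0 \<le> t"
    and cover: "\<And>x. x \<notin> E \<Longrightarrow> \<exists>n\<in>{1..N}. t * real n < visits B n x"
  shows "t * real L \<le> visits B L x + t * visits E L x + t * real N"
proof (induction L arbitrary: x rule: less_induct)
  case (less L)
  show ?case
  proof (cases "L \<le> N")
    case True
    then have "t * real L \<le> t * real N" using t by (intro mult_left_mono) auto
    with visits_nonneg[of B L x] mult_nonneg_nonneg[OF t visits_nonneg[of E L x]]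
    show ?thesis by linarith
  next
    case False
    then obtain L' where L': "L = Suc L'" by (cases L) auto
    show ?thesis
    proof (cases "x \<in> E")
      case True
      have "t * real L' \<le> visits B L' (T x) + t * visits E L' (T x) + t * real N"
        using less L' by simp
      moreover have "visits B L' (T x) \<le> visits B L x"
        by (simp add: L' visits_Suc)
      moreover have "visits E L x = 1 + visits E L' (T x)"
        using True by (simp add: L' visits_Suc)
      ultimately show ?thesis using t by (simp add: L' algebra_simps)
    next
      case False
      then obtain n where n: "n \<in> {1..N}" "t * real n < visits B n x" using cover by blast
      then have L: "L = n + (L - n)" "L - n < L" using \<open>\<not> L \<le> N\<close> by auto
      have "t * real (L - n) \<le> visits B (L - n) ((T ^^ n) x) + t * visits E (L - n) ((T ^^ n) x) + t * real N"
        using less L(2) by blast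
      moreover have "visits B L x = visits B n x + visits B (L - n) ((T ^^ n) x)"
        by (subst L(1), rule visits_add)
      moreover have "visits E (L - n) ((T ^^ n) x) \<le> visits E L x"
        using visits_add[of E n "L - n" x] visits_nonneg[of E n x] L(1) by simp
      moreover have "t * real L = t * real n + t * real (L - n)"
        using L(1) by (metis distrib_left of_nat_add)
      ultimately show ?thesis
        using n(2) t mult_left_mono[of "visits E (L - n) ((T ^^ n) x)" "visits E L x" t] by linarith
    qed
  qed
qed

theorem maximal_ergodic_inequality:
  assumes B[measurable]: "B \<in> sets M" and t: "0 \<le> t"
  shows "t * prob {x. \<exists>n\<in>{1..N}. t * real n < visits B n x} \<le> prob B"
proof (rule le_of_le_add_const_over_n[where N = 1 and c = "t * real N"])
  have [measurable]: "visits B n \<in> borel_measurable M" for n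
    by (rule borel_measurable_visits) simp
  define E where "E = {x. \<forall>n\<in>{1..N}. visits B n x \<le> t * real n}"
  have E[measurable]: "E \<in> sets M"
    unfolding E_def by (rule Collect_in_sets) measurable
  fix L :: nat assume L: "1 \<le> L"
  have "t * real L \<le> visits B L x + t * visits E L x + t * real N" for x
    by (rule visits_covering_bound[OF t]) (auto simp: E_def not_le)
  moreover have "integrable M (\<lambda>x. visits B L x + t * visits E L x + t * real N)"
    by (intro Bochner_Integration.integrable_add integrable_mult_right integrable_const
        integrable_visits B E)
  ultimately have "integral\<^sup>L M (\<lambda>x. t * real L)
      \<le> integral\<^sup>L M (\<lambda>x. visits B L x + t * visits E L x + t * real N)"
    by (intro integral_mono) auto
  then have "t * real L \<le> real L * prob B + t * (real L * prob E) + t * real N"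
    by (simp add: integrable_visits integral_visits prob_space)
  then have "real L * (t * (1 - prob E)) \<le> real L * (prob B + t * real N / real L)"
    using L by (simp add: algebra_simps)
  moreover have "{x. \<exists>n\<in>{1..N}. t * real n < visits B n x} = space M - E"
    by (auto simp: E_def space_eq_UNIV not_le)
  ultimately show "t * prob {x. \<exists>n\<in>{1..N}. t * real n < visits B n x} \<le> prob B + t * real N / real L"
    using L by (simp add: prob_compl mult_le_cancel_left_pos)
qed

definition upper_freq :: "'a set \<Rightarrow> 'a \<Rightarrow> ereal" where
  "upper_freq B x = limsup (\<lambda>n. ereal (visits B n x / real n))"

lemma borel_measurable_upper_freq:
  assumes [measurable]: "B \<in> sets M"
  shows "upper_freq B \<in> borel_measurable M"
proof -
  have [measurable]: "visits B n \<in> borel_measurable M" for n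
    by (rule borel_measurable_visits) simp
  show ?thesis unfolding upper_freq_def by measurable
qed

lemma upper_freq_T: "upper_freq B (T x) = upper_freq B x"
proof -
  define u where "u n = visits B n (T x) / real n" for n
  define d where "d n = visits B (Suc n) x / real (Suc n) - u n" for n
  have "d \<longlonglongrightarrow> 0"
  proof (rule Lim_null_comparison)
    show "(\<lambda>n. 1 / real (Suc n)) \<longlonglongrightarrow> 0"
      using LIMSEQ_Suc[OF lim_const_over_n[of 1]] by simp
    have "norm (d n) \<le> 1 / real (Suc n)" if "1 \<le> n" for n
    proof -
      have "d n = (indicator B x - u n) / real (Suc n)"
        using that by (simp add: d_def u_def visits_Suc field_simps)
      moreover have "0 \<le> u n" "u n \<le> 1"
        using visits_nonneg visits_le[of B n "T x"] that by (auto simp: u_def divide_le_eq_1)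
      then have "\<bar>indicator B x - u n\<bar> \<le> (1::real)"
        by (auto simp: indicator_def)
      ultimately show ?thesis
        by (simp add: abs_divide divide_right_mono del: of_nat_Suc)
    qed
    then show "\<forall>\<^sub>F n in sequentially. norm (d n) \<le> 1 / real (Suc n)"
      by (rule eventually_sequentiallyI)
  qed
  have "upper_freq B x = limsup (\<lambda>n. ereal (visits B (n + 1) x / real (n + 1)))"
    unfolding upper_freq_def by (rule limsup_shift[symmetric])
  also have "\<dots> = limsup (\<lambda>n. ereal (d n) + ereal (u n))"
    by (simp add: d_def)
  also have "\<dots> = 0 + limsup (\<lambda>n. ereal (u n))"
    using \<open>d \<longlonglongrightarrow> 0\<close> by (intro ereal_limsup_lim_add) (auto simp: zero_ereal_def)
  finally show ?thesis by (simp add: upper_freq_def u_def)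
qed

lemma prob_upper_freq_gt_le:
  assumes B[measurable]: "B \<in> sets M" and t: "0 \<le> t"
  shows "t * prob {x. ereal t < upper_freq B x} \<le> prob B"
proof -
  have [measurable]: "visits B n \<in> borel_measurable M" for n
    by (rule borel_measurable_visits) simp
  define G where "G N = {x. \<exists>n\<in>{1..N}. t * real n < visits B n x}" for N
  have G[measurable]: "G N \<in> sets M" for N
    unfolding G_def by (rule Collect_in_sets) measurable
  have "incseq G" by (auto simp: incseq_def G_def)
  then have "(\<lambda>N. prob (G N)) \<longlonglongrightarrow> prob (\<Union>N. G N)"
    using G by (intro finite_Lim_measure_incseq) auto
  moreover have "t * prob (G N) \<le> prob B" for N
    unfolding G_def by (rule maximal_ergodic_inequality[OF B t])
  ultimately have "t * prob (\<Union>N. G N) \<le> prob B"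
    by (intro LIMSEQ_le_const2[OF tendsto_mult_left]) auto
  moreover have "{x. ereal t < upper_freq B x} \<subseteq> (\<Union>N. G N)"
  proof
    fix x assume "x \<in> {x. ereal t < upper_freq B x}"
    then obtain n where "ereal t < ereal (visits B n x / real n)"
      unfolding upper_freq_def by (auto dest: Limsup_obtain)
    then have n: "t < visits B n x / real n" by simp
    with t have "n \<noteq> 0" by (cases "n = 0") auto
    with n have "x \<in> G n" by (auto simp: G_def field_simps)
    then show "x \<in> (\<Union>N. G N)" by blast
  qed
  then have "prob {x. ereal t < upper_freq B x} \<le> prob (\<Union>N. G N)"
    by (intro finite_measure_mono) auto
  ultimately show ?thesis using t by (meson mult_left_mono order_trans)
qed

lemma upper_freq_le_prob_AE:
  assumes B[measurable]: "B \<in> sets M"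
  shows "AE x in M. upper_freq B x \<le> ereal (prob B)"
proof -
  have "AE x in M. upper_freq B x \<le> ereal (prob B + 1 / real (Suc k))" for k
  proof -
    define t where "t = prob B + 1 / real (Suc k)"
    have [measurable]: "upper_freq B \<in> borel_measurable M"
      by (rule borel_measurable_upper_freq) simp
    define U where "U = {x. ereal t < upper_freq B x}"
    have U[measurable]: "U \<in> sets M"
      unfolding U_def by (rule Collect_in_sets) measurable
    have "prob U = 0 \<or> prob U = 1"
      using U by (rule backward_invariant_prob_0_or_1) (simp add: U_def upper_freq_T)
    moreover have "t * prob U \<le> prob B"
      unfolding U_def by (intro prob_upper_freq_gt_le B) (simp add: t_def)
    moreover have "prob B < t" by (simp add: t_def)
    ultimately have "prob U = 0" by auto
    then show ?thesis
      using prob_eq_0[OF U] by (simp add: U_def t_def not_less)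
  qed
  then have "AE x in M. \<forall>k. upper_freq B x \<le> ereal (prob B + 1 / real (Suc k))"
    by (simp add: AE_all_countable)
  then show ?thesis
  proof eventually_elim
    case (elim x)
    have "(\<lambda>k. ereal (prob B + 1 / real (Suc k))) \<longlonglongrightarrow> ereal (prob B + 0)"
      by (intro tendsto_ereal tendsto_add tendsto_const LIMSEQ_Suc[OF lim_const_over_n])
    then have lim: "(\<lambda>k. ereal (prob B + 1 / real (Suc k))) \<longlonglongrightarrow> ereal (prob B)"
      by simp
    show ?case
      by (rule LIMSEQ_le_const[OF lim]) (use elim in blast)
  qed
qed

theorem birkhoff_indicator:
  assumes B[measurable]: "B \<in> sets M"
  shows "AE x in M. (\<lambda>n. visits B n x / real n) \<longlonglongrightarrow> prob B"
proof -
  have "- B = space M - B" by (simp add: space_eq_UNIV Compl_eq_Diff_UNIV)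
  then have "- B \<in> sets M" "prob (- B) = 1 - prob B" by (simp_all add: prob_compl)
  then have "AE x in M. upper_freq (- B) x \<le> ereal (1 - prob B)"
    using upper_freq_le_prob_AE[of "- B"] by simp
  with upper_freq_le_prob_AE[OF B] show ?thesis
  proof eventually_elim
    case (elim x)
    define a where "a n = visits B n x / real n" for n
    have "limsup (\<lambda>n. ereal (1 - a n)) = upper_freq (- B) x"
      unfolding upper_freq_def a_def
      by (intro Limsup_eq eventually_sequentiallyI[of 1]) (simp add: visits_Compl diff_divide_distrib)
    moreover have "limsup (\<lambda>n. ereal (1 - a n)) = ereal 1 - liminf (\<lambda>n. ereal (a n))"
    proof -
      have "limsup (\<lambda>n. ereal (1 - a n)) = limsup (\<lambda>n. ereal 1 + - ereal (a n))"
        by simp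
      also have "\<dots> = ereal 1 + limsup (\<lambda>n. - ereal (a n))"
        by (rule ereal_limsup_lim_add) auto
      also have "\<dots> = ereal 1 + - liminf (\<lambda>n. ereal (a n))"
        by (simp only: ereal_Limsup_uminus)
      finally show ?thesis
        by (simp add: minus_ereal_def)
    qed
    ultimately have "ereal 1 - liminf (\<lambda>n. ereal (a n)) \<le> ereal (1 - prob B)"
      using elim(2) by simp
    then have "ereal (prob B) \<le> liminf (\<lambda>n. ereal (a n))"
      by (cases "liminf (\<lambda>n. ereal (a n))") auto
    with elim(1) show ?case
      unfolding a_def[symmetric] upper_freq_def by (intro limsup_le_liminf_real) auto
  qed
qed

end

section \<open>Entropy of the joins of a partition\<close>

lemma (in prob_space) sum_prob_eq_of_indicator:
  assumes I: "finite I" and S: "\<And>i. i \<in> I \<Longrightarrow> S i \<in> events" and R: "R \<in> events"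
    and eq: "\<And>x. (\<Sum>i\<in>I. indicator (S i) x) = (indicator R x :: real)"
  shows "(\<Sum>i\<in>I. prob (S i)) = prob R"
proof -
  have "(\<Sum>i\<in>I. prob (S i)) = (\<Sum>i\<in>I. integral\<^sup>L M (indicator (S i)))"
    using S by (simp add: emeasure_eq_measure)
  also have "\<dots> = integral\<^sup>L M (\<lambda>x. \<Sum>i\<in>I. indicator (S i) x)"
    using S by (intro Bochner_Integration.integral_sum[symmetric])
       (auto simp: emeasure_eq_measure intro!: integrable_real_indicator)
  also have "\<dots> = prob R" using R by (simp add: eq emeasure_eq_measure)
  finally show ?thesis .
qed

locale ergodic_partition = ergodic_transformation +
  fixes m :: nat and A :: "nat \<Rightarrow> 'a set"
  assumes partition: "measurable_partition M m A"
begin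

definition words :: "nat \<Rightarrow> nat list set" where
  "words n = {w \<in> strings_over m. length w = n}"

abbreviation orbit :: "'a \<Rightarrow> nat \<Rightarrow> nat" where
  "orbit \<equiv> sym_orbit m A T"

abbreviation cyl :: "nat list \<Rightarrow> 'a set" where
  "cyl \<equiv> cylinder A T"

abbreviation H :: "nat \<Rightarrow> real" where
  "H \<equiv> join_entropy M m A T"

lemma partition_in_sets: "i \<in> {1..m} \<Longrightarrow> A i \<in> sets M"
  using partition by (simp add: measurable_partition_def)

lemma partition_cover: "\<exists>i\<in>{1..m}. y \<in> A i"
  using partition by (auto simp: measurable_partition_def space_eq_UNIV)

lemma partition_disjoint: "i \<in> {1..m} \<Longrightarrow> j \<in> {1..m} \<Longrightarrow> y \<in> A i \<Longrightarrow> y \<in> A j \<Longrightarrow> i = j"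
  using partition unfolding measurable_partition_def disjoint_family_on_def by blast

lemma partition_nonempty: "1 \<le> m"
  using partition_cover[of undefined] by auto

lemma sym_orbit_eqI: "i \<in> {1..m} \<Longrightarrow> (T ^^ j) x \<in> A i \<Longrightarrow> orbit x j = i"
  unfolding sym_orbit_def by (rule the_equality) (use partition_disjoint in blast)+

lemma sym_orbit: "orbit x j \<in> {1..m} \<and> (T ^^ j) x \<in> A (orbit x j)"
proof -
  obtain i where "i \<in> {1..m}" "(T ^^ j) x \<in> A i" using partition_cover by blast
  then show ?thesis using sym_orbit_eqI by simp
qed

lemma sym_orbit_funpow: "orbit ((T ^^ i) x) = (\<lambda>j. orbit x (i + j))"
proof
  fix j
  have "(T ^^ j) ((T ^^ i) x) = (T ^^ (i + j)) x"
    by (metis add.commute comp_apply funpow_add)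
  then show "orbit ((T ^^ i) x) j = orbit x (i + j)"
    using sym_orbit[of x "i + j"] by (intro sym_orbit_eqI) auto
qed

lemma prefix_in_words: "prefix_of (orbit x) n \<in> words n"
  using sym_orbit by (auto simp: words_def strings_over_def prefix_of_def)

lemma finite_words: "finite (words n)"
  using finite_lists_length_eq[of "{1..m}" n] by (simp add: words_def strings_over_def)

lemma card_words: "card (words n) = m ^ n"
  using card_lists_length_eq[of "{1..m}" n] by (simp add: words_def strings_over_def)

lemma words_append: "u \<in> words n \<Longrightarrow> v \<in> words k \<Longrightarrow> u @ v \<in> words (n + k)"
  by (simp add: words_def strings_over_def)

lemma words_add: "words (n + k) = (\<lambda>(u, v). u @ v) ` (words n \<times> words k)"
proof (intro set_eqI iffI)
  fix w assume w: "w \<in> words (n + k)"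
  then have "take n w \<in> words n" "drop n w \<in> words k"
    by (auto simp: words_def strings_over_def dest: in_set_takeD in_set_dropD)
  then show "w \<in> (\<lambda>(u, v). u @ v) ` (words n \<times> words k)"
    by (intro image_eqI[of _ _ "(take n w, drop n w)"]) simp_all
qed (auto intro: words_append)

lemma inj_on_append_words: "inj_on (\<lambda>(u, v). u @ v) (words n \<times> words k)"
  by (auto simp: inj_on_def words_def)

lemma mem_cyl_iff: "w \<in> words n \<Longrightarrow> x \<in> cyl w \<longleftrightarrow> prefix_of (orbit x) n = w"
proof
  assume w: "w \<in> words n" and x: "x \<in> cyl w"
  show "prefix_of (orbit x) n = w"
  proof (rule nth_equalityI)
    show "length (prefix_of (orbit x) n) = length w" using w by (simp add: words_def)
    fix j assume "j < length (prefix_of (orbit x) n)"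
    then have j: "j < length w" using w by (simp add: words_def)
    then have "w ! j \<in> {1..m}" using w nth_mem[OF j] unfolding words_def strings_over_def by blast
    moreover have "(T ^^ j) x \<in> A (w ! j)" using x j by (simp add: cylinder_def)
    ultimately show "prefix_of (orbit x) n ! j = w ! j"
      using j w by (simp add: sym_orbit_eqI words_def)
  qed
next
  assume "w \<in> words n" and "prefix_of (orbit x) n = w"
  then show "x \<in> cyl w" using sym_orbit by (auto simp: cylinder_def words_def)
qed

lemma cyl_in_sets: "w \<in> strings_over m \<Longrightarrow> cyl w \<in> sets M"
proof (induction w)
  case (Cons a w)
  then have "A a \<in> sets M" "cyl w \<in> sets M" by (auto simp: strings_over_def partition_in_sets)
  then show ?case by (auto simp: cylinder_Cons intro!: sets.Int vimage_T_in_sets)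
qed (simp add: space_eq_UNIV[symmetric])

lemma words_cyl_in_sets: "w \<in> words n \<Longrightarrow> cyl w \<in> sets M"
  by (simp add: words_def cyl_in_sets)

lemma prefix_set_eq_UN_cyl: "{x. P (prefix_of (orbit x) n)} = (\<Union>w\<in>{w \<in> words n. P w}. cyl w)"
proof (intro set_eqI iffI)
  fix x assume "x \<in> {x. P (prefix_of (orbit x) n)}"
  then show "x \<in> (\<Union>w\<in>{w \<in> words n. P w}. cyl w)"
    using mem_cyl_iff[OF prefix_in_words[of x n]] prefix_in_words[of x n] by blast
qed (auto simp: mem_cyl_iff)

lemma prefix_set_in_sets: "{x. P (prefix_of (orbit x) n)} \<in> sets M"
  unfolding prefix_set_eq_UN_cyl by (intro sets.finite_UN) (auto simp: finite_words words_cyl_in_sets)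

lemma sum_indicator_cyl: "(\<Sum>w\<in>words n. indicator (cyl w) x) = (1::real)"
proof -
  have "(\<Sum>w\<in>words n. indicator (cyl w) x) = (\<Sum>w\<in>words n. if w = prefix_of (orbit x) n then 1 else (0::real))"
    by (intro sum.cong refl) (auto simp: mem_cyl_iff)
  then show ?thesis using prefix_in_words finite_words by simp
qed

lemma sum_prob_cyl: "(\<Sum>w\<in>words n. prob (cyl w)) = 1"
proof -
  have "(\<Sum>w\<in>words n. prob (cyl w)) = prob UNIV"
    by (rule sum_prob_eq_of_indicator) (simp_all add: finite_words words_cyl_in_sets sum_indicator_cyl)
  then show ?thesis by (simp add: prob_space flip: space_eq_UNIV)
qed

lemma sum_prob_cyl_append_right:
  assumes u: "u \<in> words n"
  shows "(\<Sum>v\<in>words k. prob (cyl (u @ v))) = prob (cyl u)"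
proof (rule sum_prob_eq_of_indicator)
  fix x
  have "(\<Sum>v\<in>words k. indicator (cyl (u @ v)) x)
      = indicator (cyl u) x * (\<Sum>v\<in>words k. indicator (cyl v) ((T ^^ n) x) :: real)"
    using u by (simp add: cylinder_append words_def sum_distrib_left indicator_inter_arith indicator_vimage)
  then show "(\<Sum>v\<in>words k. indicator (cyl (u @ v)) x) = (indicator (cyl u) x :: real)"
    by (simp add: sum_indicator_cyl)
qed (auto simp: finite_words intro!: words_cyl_in_sets words_append u)

lemma sum_prob_cyl_append_left:
  assumes v: "v \<in> words k"
  shows "(\<Sum>u\<in>words n. prob (cyl (u @ v))) = prob (cyl v)"
proof -
  have "(\<Sum>u\<in>words n. prob (cyl (u @ v))) = prob ((T ^^ n) -` cyl v)"
  proof (rule sum_prob_eq_of_indicator)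
    fix x
    have "(\<Sum>u\<in>words n. indicator (cyl (u @ v)) x)
        = (\<Sum>u\<in>words n. indicator (cyl u) x) * (indicator (cyl v) ((T ^^ n) x) :: real)"
      by (simp add: cylinder_append words_def sum_distrib_right indicator_inter_arith indicator_vimage)
    then show "(\<Sum>u\<in>words n. indicator (cyl (u @ v)) x) = (indicator ((T ^^ n) -` cyl v) x :: real)"
      by (simp add: sum_indicator_cyl indicator_vimage)
  qed (auto simp: finite_words intro!: words_cyl_in_sets words_append vimage_funpow_in_sets v)
  also have "\<dots> = prob (cyl v)"
    using v by (simp add: prob_vimage_funpow words_cyl_in_sets)
  finally show ?thesis .
qed

lemma join_entropy_eq: "H n = - (\<Sum>w\<in>words n. prob (cyl w) * log 2 (prob (cyl w)))"
  by (simp add: join_entropy_def words_def space_eq_UNIV)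

lemma join_entropy_nonneg: "0 \<le> H n"
proof -
  have "0 \<le> (\<Sum>w\<in>words n. - (prob (cyl w) * log 2 (prob (cyl w))))"
    by (intro sum_nonneg neg_mult_log_nonneg) auto
  then show ?thesis by (simp add: join_entropy_eq sum_negf)
qed

lemma join_entropy_subadditive: "H (n + k) \<le> H n + H k"
proof -
  let ?p = "\<lambda>w. prob (cyl w)"
  have "(\<Sum>w\<in>words (n + k). ?p w * ln (?p w)) = (\<Sum>u\<in>words n. \<Sum>v\<in>words k. ?p (u @ v) * ln (?p (u @ v)))"
    unfolding words_add sum.reindex[OF inj_on_append_words] sum.cartesian_product
    by (simp add: case_prod_beta')
  moreover have "- (\<Sum>u\<in>words n. \<Sum>v\<in>words k. ?p (u @ v) * ln (?p (u @ v)))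
      \<le> - (\<Sum>u\<in>words n. ?p u * ln (?p u)) - (\<Sum>v\<in>words k. ?p v * ln (?p v))"
    by (rule entropy_joint_le_marginals)
       (simp_all add: finite_words sum_prob_cyl_append_right sum_prob_cyl_append_left sum_prob_cyl)
  ultimately have "- (\<Sum>w\<in>words (n + k). ?p w * ln (?p w)) / ln 2
      \<le> (- (\<Sum>u\<in>words n. ?p u * ln (?p u)) - (\<Sum>v\<in>words k. ?p v * ln (?p v))) / ln 2"
    by (intro divide_right_mono) auto
  then show ?thesis
    by (simp add: join_entropy_eq log_def sum_divide_distrib diff_divide_distrib)
qed

lemma tendsto_join_entropy_Inf: "(\<lambda>n. H n / real n) \<longlonglongrightarrow> (INF n\<in>{1..}. H n / real n)"
  by (intro fekete_subadditive join_entropy_subadditive join_entropy_nonneg)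

lemma metric_entropy_eq_Inf: "metric_entropy M m A T = (INF n\<in>{1..}. H n / real n)"
  unfolding metric_entropy_def using tendsto_join_entropy_Inf by (rule limI)

lemma tendsto_join_entropy: "(\<lambda>n. H n / real n) \<longlonglongrightarrow> metric_entropy M m A T"
  using tendsto_join_entropy_Inf by (simp add: metric_entropy_eq_Inf)

lemma metric_entropy_le: "1 \<le> n \<Longrightarrow> metric_entropy M m A T \<le> H n / real n"
  unfolding metric_entropy_eq_Inf
  by (rule cINF_lower) (auto intro!: bdd_belowI[of _ 0] divide_nonneg_nonneg join_entropy_nonneg)

section \<open>Empirical entropy along symbolic orbits\<close>

lemma emp_freq_prefix_eq_visits:
  assumes w: "w \<in> words k" and kn: "k \<le> n"
  shows "emp_freq (prefix_of (orbit x) n) w = visits (cyl w) (n - k + 1) x / real (n - k + 1)"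
proof -
  have "take k (drop i (prefix_of (orbit x) n)) = prefix_of (orbit ((T ^^ i) x)) k"
    if "i \<le> n - k" for i
    using that kn by (simp add: take_drop_prefix_of sym_orbit_funpow)
  then have "{i. i \<le> n - k \<and> take k (drop i (prefix_of (orbit x) n)) = w}
      = {j. j < n - k + 1 \<and> (T ^^ j) x \<in> cyl w}"
    using mem_cyl_iff[OF w] by auto
  then show ?thesis
    using w by (simp add: emp_freq_def visits_eq_card words_def)
qed

lemma emp_freq_tendsto_AE:
  assumes w: "w \<in> words k"
  shows "AE x in M. (\<lambda>n. emp_freq (prefix_of (orbit x) n) w) \<longlonglongrightarrow> prob (cyl w)"
  using birkhoff_indicator[OF words_cyl_in_sets[OF w]]
proof eventually_elim
  case (elim x)
  have "(\<lambda>n. emp_freq (prefix_of (orbit x) (n + k)) w) = (\<lambda>n. visits (cyl w) (Suc n) x / real (Suc n))"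
    by (rule ext) (simp add: emp_freq_prefix_eq_visits[OF w])
  then have "(\<lambda>n. emp_freq (prefix_of (orbit x) (n + k)) w) \<longlonglongrightarrow> prob (cyl w)"
    using LIMSEQ_Suc[OF elim] by simp
  then show ?case by (rule LIMSEQ_offset)
qed

lemma emp_entropy_tendsto_AE:
  "AE x in M. (\<lambda>n. emp_entropy m k (prefix_of (orbit x) n)) \<longlonglongrightarrow> H k / real k"
proof -
  have "AE x in M. \<forall>w\<in>words k. (\<lambda>n. emp_freq (prefix_of (orbit x) n) w) \<longlonglongrightarrow> prob (cyl w)"
    by (subst AE_ball_countable) (auto intro: countable_finite finite_words emp_freq_tendsto_AE)
  then show ?thesis
  proof eventually_elim
    case (elim x)
    let ?f = "\<lambda>n w. emp_freq (prefix_of (orbit x) n) w"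
    have "(\<lambda>n. - (1 / real k) * (\<Sum>w\<in>words k. ?f n w * log 2 (?f n w)))
        \<longlonglongrightarrow> - (1 / real k) * (\<Sum>w\<in>words k. prob (cyl w) * log 2 (prob (cyl w)))"
      using elim by (intro tendsto_mult tendsto_const tendsto_sum tendsto_mult_log2)
        (auto simp: emp_freq_def)
    then show ?case by (simp add: emp_entropy_def words_def join_entropy_eq)
  qed
qed

lemma K_Z_point_le_join_entropy_AE:
  assumes "coarsely_optimal m Z" and "1 \<le> k"
  shows "AE x in M. K_Z_point Z m A T x \<le> ereal (H k / real k)"
proof -
  obtain f :: "nat \<Rightarrow> real" where f: "f \<in> o(\<lambda>n. real n)"
    and bound: "\<And>s. s \<in> strings_over m \<Longrightarrow>
      real (length (Z s)) \<le> real (length s) * emp_entropy m k s + f (length s)"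
    using assms unfolding coarsely_optimal_def by blast
  have f0: "(\<lambda>n. f n / real n) \<longlonglongrightarrow> 0"
    using smalloD_tendsto[OF f] by simp
  show ?thesis
    using emp_entropy_tendsto_AE[of k]
  proof eventually_elim
    case (elim x)
    define E where "E n = emp_entropy m k (prefix_of (orbit x) n)" for n
    have "real (length (Z (prefix_of (orbit x) n))) / real n \<le> E n + f n / real n" if "1 \<le> n" for n
    proof -
      have "real (length (Z (prefix_of (orbit x) n))) \<le> real n * E n + f n"
        using bound[of "prefix_of (orbit x) n"] prefix_in_words[of x n] by (simp add: E_def words_def)
      then show ?thesis using that by (simp add: field_simps)
    qed
    then have "K_Z_point Z m A T x \<le> limsup (\<lambda>n. ereal (E n + f n / real n))"
      unfolding K_Z_point_def K_Z_def by (intro Limsup_mono eventually_sequentiallyI[of 1]) simp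
    also have "\<dots> = ereal (H k / real k)"
      using tendsto_add[OF elim f0] by (intro lim_imp_Limsup tendsto_ereal) (simp_all add: E_def)
    finally show ?case .
  qed
qed

lemma K_Z_point_le_metric_entropy_AE:
  assumes "coarsely_optimal m Z"
  shows "AE x in M. K_Z_point Z m A T x \<le> ereal (metric_entropy M m A T)"
proof -
  have "AE x in M. \<forall>k. K_Z_point Z m A T x \<le> ereal (H (Suc k) / real (Suc k))"
    by (subst AE_all_countable) (intro allI K_Z_point_le_join_entropy_AE[OF assms], simp)
  then show ?thesis
  proof eventually_elim
    case (elim x)
    have "(\<lambda>k. ereal (H (Suc k) / real (Suc k))) \<longlonglongrightarrow> ereal (metric_entropy M m A T)"
      using LIMSEQ_Suc[OF tendsto_join_entropy] by (rule tendsto_ereal)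
    then show ?case by (rule LIMSEQ_le_const) (use elim in blast)
  qed
qed

section \<open>Local entropy of cylinders\<close>

definition cell_prob :: "nat \<Rightarrow> 'a \<Rightarrow> real" where
  "cell_prob n x = prob (cyl (prefix_of (orbit x) n))"

lemma cell_prob_set_in_sets: "{x. P (cell_prob n x)} \<in> sets M"
  unfolding cell_prob_def by (rule prefix_set_in_sets)

lemma cell_prob_Suc_le: "cell_prob (Suc n) x \<le> cell_prob n (T x)"
proof -
  have "prefix_of (orbit x) (Suc n) = orbit x 0 # prefix_of (orbit (T x)) n"
    using sym_orbit_funpow[of 1 x] by (simp add: prefix_of_Suc)
  then have "cyl (prefix_of (orbit x) (Suc n)) \<subseteq> T -` cyl (prefix_of (orbit (T x)) n)"
    by (simp add: cylinder_Cons)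
  then have "cell_prob (Suc n) x \<le> prob (T -` cyl (prefix_of (orbit (T x)) n))"
    unfolding cell_prob_def
    by (intro finite_measure_mono vimage_T_in_sets words_cyl_in_sets[OF prefix_in_words])
  also have "\<dots> = cell_prob n (T x)"
    unfolding cell_prob_def by (intro prob_vimage_T words_cyl_in_sets[OF prefix_in_words])
  finally show ?thesis .
qed

definition cells_often_below :: "real \<Rightarrow> 'a set" where
  "cells_often_below t = {x. \<forall>N. \<exists>n\<ge>N. cell_prob n x \<le> 2 powr (- t * real n)}"

text \<open>\<open>x \<in> local_entropy_ge t\<close> means \<open>limsup\<^sub>n - log\<^sub>2 \<mu>(C\<^sub>n(x)) / n \<ge> t\<close> for the
  \<open>n\<close>-cylinder \<open>C\<^sub>n(x)\<close> of \<open>x\<close>; it is phrased without logarithms so that null cylinders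
  need no special care.\<close>

definition local_entropy_ge :: "real \<Rightarrow> 'a set" where
  "local_entropy_ge t = (\<Inter>k. cells_often_below (t - 1 / real (Suc k)))"

lemma cells_often_below_in_sets: "cells_often_below t \<in> sets M"
proof -
  have "cells_often_below t = (\<Inter>N. \<Union>n\<in>{N..}. {x. cell_prob n x \<le> 2 powr (- t * real n)})"
    by (auto simp: cells_often_below_def)
  also have "\<dots> \<in> sets M"
    by (intro sets.countable_INT'' sets.countable_UN'' UNIV_in_sets cell_prob_set_in_sets) auto
  finally show ?thesis .
qed

lemma local_entropy_ge_in_sets: "local_entropy_ge t \<in> sets M"
  unfolding local_entropy_ge_def
  by (intro sets.countable_INT'' UNIV_in_sets cells_often_below_in_sets) auto

lemma cells_often_below_antimono:
  assumes "s' \<le> s" and "x \<in> cells_often_below s"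
  shows "x \<in> cells_often_below s'"
proof -
  have le: "2 powr (- s * real n) \<le> 2 powr (- s' * real n)" for n
    using assms(1) by (intro powr_mono) (auto intro: mult_right_mono)
  show ?thesis unfolding cells_often_below_def
  proof (intro CollectI allI)
    fix N
    obtain n where "N \<le> n" "cell_prob n x \<le> 2 powr (- s * real n)"
      using assms(2) unfolding cells_often_below_def by blast
    with le[of n] show "\<exists>n\<ge>N. cell_prob n x \<le> 2 powr (- s' * real n)"
      by (blast intro: order_trans)
  qed
qed

lemma cells_often_below_T:
  assumes "s' < s" and "T x \<in> cells_often_below s"
  shows "x \<in> cells_often_below s'"
  unfolding cells_often_below_def
proof (intro CollectI allI)
  fix N
  obtain N0 :: nat where N0: "\<bar>s'\<bar> / (s - s') \<le> real N0" using real_arch_simple by blast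
  obtain n where n: "max N N0 \<le> n" "cell_prob n (T x) \<le> 2 powr (- s * real n)"
    using assms(2) unfolding cells_often_below_def by blast
  have "\<bar>s'\<bar> \<le> real N0 * (s - s')"
    using N0 assms(1) by (simp add: divide_le_eq)
  also have "\<dots> \<le> real n * (s - s')"
    using n(1) assms(1) by (intro mult_right_mono) auto
  finally have "s' * real (Suc n) \<le> s * real n"
    by (simp add: algebra_simps)
  then have "2 powr (- s * real n) \<le> 2 powr (- s' * real (Suc n))"
    by (intro powr_mono) auto
  with n(2) cell_prob_Suc_le[of n x] have "cell_prob (Suc n) x \<le> 2 powr (- s' * real (Suc n))"
    by linarith
  with n(1) show "\<exists>n\<ge>N. cell_prob n x \<le> 2 powr (- s' * real n)"
    by (intro exI[of _ "Suc n"]) auto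
qed

lemma local_entropy_ge_backward:
  assumes "T x \<in> local_entropy_ge t"
  shows "x \<in> local_entropy_ge t"
  unfolding local_entropy_ge_def
proof
  fix k :: nat
  have "t - 1 / real (Suc k) < t - 1 / real (Suc (Suc k))"
    by (simp add: frac_less2)
  moreover have "T x \<in> cells_often_below (t - 1 / real (Suc (Suc k)))"
    using assms unfolding local_entropy_ge_def by blast
  ultimately show "x \<in> cells_often_below (t - 1 / real (Suc k))"
    by (rule cells_often_below_T)
qed

lemma cells_often_below_if_local_entropy_ge:
  assumes "s < t" and "x \<in> local_entropy_ge t"
  shows "x \<in> cells_often_below s"
proof -
  obtain k :: nat where "1 / (t - s) < real k"
    using reals_Archimedean2 by blast
  then have "1 / (t - s) < real (Suc k)" by simp
  then have "s \<le> t - 1 / real (Suc k)"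
    using assms(1) by (simp add: field_simps)
  moreover have "x \<in> cells_often_below (t - 1 / real (Suc k))"
    using assms(2) by (simp add: local_entropy_ge_def)
  ultimately show ?thesis by (rule cells_often_below_antimono)
qed

lemma card_words_prob_gt_le:
  assumes c: "0 < c"
  shows "real (card {w \<in> words n. c < prob (cyl w)}) \<le> 1 / c"
proof -
  let ?W = "{w \<in> words n. c < prob (cyl w)}"
  have "real (card ?W) * c = (\<Sum>w\<in>?W. c)" by simp
  also have "\<dots> \<le> (\<Sum>w\<in>?W. prob (cyl w))" by (intro sum_mono) auto
  also have "\<dots> \<le> (\<Sum>w\<in>words n. prob (cyl w))" by (intro sum_mono2 finite_words) auto
  finally show ?thesis using c by (simp add: sum_prob_cyl field_simps)
qed

lemma join_entropy_le_if_large_cells: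
  assumes t: "0 \<le> t" and n: "1 \<le> n"
    and large: "1 - \<delta> \<le> prob {x. 2 powr (- t * real n) < cell_prob n x}"
  shows "H n / real n \<le> t + \<delta> * log 2 (real m) + (2 / ln 2) / real n"
proof -
  let ?p = "\<lambda>w. prob (cyl w)"
  define W where "W = {w \<in> words n. 2 powr (- t * real n) < ?p w}"
  define W' where "W' = words n - W"
  have W: "finite W" "W \<subseteq> words n" and W': "finite W'" "card W' \<le> card (words n)"
    by (auto simp: W_def W'_def finite_words intro: card_mono)
  have split: "(\<Sum>w\<in>words n. g w) = (\<Sum>w\<in>W'. g w) + (\<Sum>w\<in>W. g w)" for g :: "nat list \<Rightarrow> real"
    unfolding W'_def by (rule sum.subset_diff[OF W(2) finite_words])
  have large_eq: "{x. 2 powr (- t * real n) < cell_prob n x} = (\<Union>w\<in>W. cyl w)"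
    unfolding cell_prob_def W_def by (rule prefix_set_eq_UN_cyl)
  have "prob {x. 2 powr (- t * real n) < cell_prob n x} \<le> (\<Sum>w\<in>W. ?p w)"
    unfolding large_eq by (rule finite_measure_subadditive_finite) (use W in \<open>auto intro: words_cyl_in_sets\<close>)
  then have mass_W': "(\<Sum>w\<in>W'. ?p w) \<le> \<delta>"
    using large split[of ?p] by (simp add: sum_prob_cyl)
  have mass_W: "(\<Sum>w\<in>W. ?p w) \<le> 1"
    using split[of ?p] sum_nonneg[of W' ?p] by (simp add: sum_prob_cyl)
  have "real (card W) \<le> 1 / 2 powr (- t * real n)"
    unfolding W_def by (rule card_words_prob_gt_le) simp
  then have "- (\<Sum>w\<in>W. ?p w * log 2 (?p w)) \<le> (\<Sum>w\<in>W. ?p w) * log 2 (2 powr (t * real n)) + 1 / ln 2"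
    by (intro neg_sum_mult_log_le W) (simp_all add: powr_minus_divide)
  also have "\<dots> \<le> t * real n + 1 / ln 2"
    using mass_W t mult_right_mono[of _ 1 "t * real n"] by simp
  finally have H_W: "- (\<Sum>w\<in>W. ?p w * log 2 (?p w)) \<le> t * real n + 1 / ln 2" .
  have m: "1 \<le> real m" using partition_nonempty by simp
  have "- (\<Sum>w\<in>W'. ?p w * log 2 (?p w)) \<le> (\<Sum>w\<in>W'. ?p w) * log 2 (real m ^ n) + 1 / ln 2"
    using W'(2) by (intro neg_sum_mult_log_le W') (simp_all add: card_words flip: of_nat_power)
  also have "\<dots> \<le> \<delta> * (real n * log 2 (real m)) + 1 / ln 2"
    using mass_W' m by (simp add: log_nat_power mult_right_mono)
  finally have H_W': "- (\<Sum>w\<in>W'. ?p w * log 2 (?p w)) \<le> \<delta> * (real n * log 2 (real m)) + 1 / ln 2" .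
  have "H n \<le> t * real n + \<delta> * (real n * log 2 (real m)) + 2 / ln 2"
    using H_W H_W' split[of "\<lambda>w. ?p w * log 2 (?p w)"] by (simp add: join_entropy_eq)
  then show ?thesis
    using n by (simp add: field_simps)
qed

lemma eventually_large_cells_if_not_local_entropy_ge:
  assumes "x \<notin> local_entropy_ge t"
  shows "\<exists>N. \<forall>n\<ge>N. 2 powr (- t * real n) < cell_prob n x"
proof -
  obtain k where "x \<notin> cells_often_below (t - 1 / real (Suc k))"
    using assms by (auto simp: local_entropy_ge_def)
  then have "\<exists>N. \<forall>n\<ge>N. 2 powr (- (t - 1 / real (Suc k)) * real n) < cell_prob n x"
    by (simp add: cells_often_below_def not_le) (meson leD)
  moreover have "2 powr (- t * real n) \<le> 2 powr (- (t - 1 / real (Suc k)) * real n)" for n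
    by (intro powr_mono) (auto simp: algebra_simps)
  ultimately show ?thesis
    by (blast intro: order_le_less_trans)
qed

lemma metric_entropy_le_if_large_cells_AE:
  assumes t: "0 \<le> t"
    and large: "AE x in M. \<exists>N. \<forall>n\<ge>N. 2 powr (- t * real n) < cell_prob n x"
  shows "metric_entropy M m A T \<le> t"
proof -
  define G where "G N = {x. \<forall>n\<ge>N. 2 powr (- t * real n) < cell_prob n x}" for N
  have G_in_sets: "G N \<in> sets M" for N
  proof -
    have "G N = (\<Inter>n\<in>{N..}. {x. 2 powr (- t * real n) < cell_prob n x})"
      by (auto simp: G_def)
    then show ?thesis
      by (auto intro!: sets.countable_INT'' cell_prob_set_in_sets)
  qed
  have "AE x in M. x \<in> (\<Union>N. G N)"
    using large by (simp add: G_def)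
  then have "prob (\<Union>N. G N) = 1"
    using G_in_sets by (subst (asm) AE_in_set_eq_1) auto
  moreover have "incseq G" by (auto simp: incseq_def G_def)
  ultimately have "(\<lambda>N. prob (G N)) \<longlonglongrightarrow> 1"
    using finite_Lim_measure_incseq[of G] G_in_sets by auto
  then have "(\<lambda>N. t + (1 - prob (G N)) * log 2 (real m)) \<longlonglongrightarrow> t + (1 - 1) * log 2 (real m)"
    by (intro tendsto_intros)
  moreover have "metric_entropy M m A T \<le> t + (1 - prob (G N)) * log 2 (real m)" for N
  proof (rule le_of_le_add_const_over_n[where N = "max N 1" and c = "2 / ln 2"])
    fix n assume n: "max N 1 \<le> n"
    then have "prob (G N) \<le> prob {x. 2 powr (- t * real n) < cell_prob n x}"
      by (intro finite_measure_mono cell_prob_set_in_sets) (auto simp: G_def)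
    then have "H n / real n \<le> t + (1 - prob (G N)) * log 2 (real m) + 2 / ln 2 / real n"
      using n by (intro join_entropy_le_if_large_cells t) auto
    moreover have "metric_entropy M m A T \<le> H n / real n"
      using n by (intro metric_entropy_le) auto
    ultimately show "metric_entropy M m A T \<le> t + (1 - prob (G N)) * log 2 (real m) + 2 / ln 2 / real n"
      by linarith
  qed
  ultimately show ?thesis
    by (intro LIMSEQ_le_const[of _ t]) auto
qed

lemma metric_entropy_le_if_null:
  assumes "0 \<le> t" and "prob (local_entropy_ge t) = 0"
  shows "metric_entropy M m A T \<le> t"
proof (rule metric_entropy_le_if_large_cells_AE[OF assms(1)])
  have "AE x in M. x \<notin> local_entropy_ge t"
    using assms(2) prob_eq_0[OF local_entropy_ge_in_sets] by simp
  then show "AE x in M. \<exists>N. \<forall>n\<ge>N. 2 powr (- t * real n) < cell_prob n x"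
    by eventually_elim (rule eventually_large_cells_if_not_local_entropy_ge)
qed

lemma prob_local_entropy_ge:
  assumes "0 \<le> t" and "t < metric_entropy M m A T"
  shows "prob (local_entropy_ge t) = 1"
  using backward_invariant_prob_0_or_1[OF local_entropy_ge_in_sets local_entropy_ge_backward]
    metric_entropy_le_if_null assms by fastforce

definition short_code_small_cell :: "(nat list \<Rightarrow> bool list) \<Rightarrow> real \<Rightarrow> real \<Rightarrow> nat \<Rightarrow> 'a set" where
  "short_code_small_cell Z a b n = {x. real (length (Z (prefix_of (orbit x) n))) \<le> a * real n
      \<and> cell_prob n x \<le> 2 powr (- b * real n)}"

lemma prob_short_code_small_cell_le:
  assumes Z: "compression_algorithm m Z" and a: "0 \<le> a"
  shows "prob (short_code_small_cell Z a b n) \<le> 2 * (2 powr (a - b)) ^ n"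
proof -
  define W where "W = {w \<in> words n. real (length (Z w)) \<le> a * real n \<and> prob (cyl w) \<le> 2 powr (- b * real n)}"
  have "W \<subseteq> strings_over m" by (auto simp: W_def words_def)
  then have "real (card W) \<le> 2 * 2 powr (a * real n)"
    using Z a by (intro card_le_if_inj_on_short_codes)
      (auto simp: W_def compression_algorithm_def intro: inj_on_subset)
  have short_eq: "short_code_small_cell Z a b n = (\<Union>w\<in>W. cyl w)"
    unfolding short_code_small_cell_def cell_prob_def W_def by (rule prefix_set_eq_UN_cyl)
  have "prob (short_code_small_cell Z a b n) \<le> (\<Sum>w\<in>W. prob (cyl w))"
    unfolding short_eq by (rule finite_measure_subadditive_finite)
      (auto simp: W_def finite_words intro: words_cyl_in_sets)
  also have "\<dots> \<le> real (card W) * 2 powr (- b * real n)"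
    using sum_mono[of W "\<lambda>w. prob (cyl w)" "\<lambda>_. 2 powr (- b * real n)"] by (simp add: W_def)
  also have "\<dots> \<le> 2 * 2 powr (a * real n) * 2 powr (- b * real n)"
    using \<open>real (card W) \<le> 2 * 2 powr (a * real n)\<close> by (intro mult_right_mono) auto
  also have "\<dots> = 2 * (2 powr (a - b)) ^ n"
    by (simp add: powr_add[symmetric] powr_realpow[symmetric] powr_powr algebra_simps)
  finally show ?thesis .
qed

lemma eventually_not_short_code_small_cell_AE:
  assumes Z: "compression_algorithm m Z" and ab: "0 \<le> a" "a < b"
  shows "AE x in M. \<forall>\<^sub>F n in sequentially. x \<notin> short_code_small_cell Z a b n"
proof -
  have in_sets: "short_code_small_cell Z a b n \<in> sets M" for n
    unfolding short_code_small_cell_def cell_prob_def by (rule prefix_set_in_sets)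
  have "2 powr (a - b) < 1" using ab by (simp add: powr_less_one)
  then have "summable (\<lambda>n. 2 * (2 powr (a - b)) ^ n)"
    by (intro summable_mult summable_geometric) simp
  then have "summable (\<lambda>n. prob (short_code_small_cell Z a b n))"
    by (rule summable_comparison_test') (use prob_short_code_small_cell_le[OF Z ab(1)] in simp)
  then have "AE x in M. \<forall>\<^sub>F n in sequentially. x \<in> space M - short_code_small_cell Z a b n"
    by (intro borel_cantelli_AE1 in_sets) (auto simp: emeasure_eq_measure)
  then show ?thesis by (simp add: space_eq_UNIV)
qed

lemma K_Z_point_lower_bound_AE:
  assumes Z: "compression_algorithm m Z" and a: "0 \<le> a" "a < metric_entropy M m A T"
  shows "AE x in M. ereal a \<le> K_Z_point Z m A T x"
proof -
  define b where "b = (a + metric_entropy M m A T) / 2"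
  define t where "t = (b + metric_entropy M m A T) / 2"
  have b: "a < b" "b < t" "0 \<le> t" "t < metric_entropy M m A T"
    using a by (auto simp: b_def t_def)
  have "AE x in M. x \<in> local_entropy_ge t"
    using prob_local_entropy_ge[OF b(3,4)] by (rule AE_prob_1)
  with eventually_not_short_code_small_cell_AE[OF Z a(1) b(1)] show ?thesis
  proof eventually_elim
    case (elim x)
    let ?r = "\<lambda>n. real (length (Z (prefix_of (orbit x) n))) / real n"
    show ?case
    proof (rule ccontr)
      assume "\<not> ereal a \<le> K_Z_point Z m A T x"
      then have "\<forall>\<^sub>F n in sequentially. ereal (?r n) < ereal a"
        unfolding K_Z_point_def K_Z_def not_le by (rule Limsup_lessD)
      with elim(1) eventually_ge_at_top[of 1]
      have "\<forall>\<^sub>F n in sequentially. 1 \<le> n \<and> ?r n < a \<and> x \<notin> short_code_small_cell Z a b n"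
        by eventually_elim simp
      then obtain N where N: "\<And>n. N \<le> n \<Longrightarrow> 1 \<le> n \<and> ?r n < a \<and> x \<notin> short_code_small_cell Z a b n"
        unfolding eventually_sequentially by blast
      have "x \<in> cells_often_below b"
        using cells_often_below_if_local_entropy_ge[OF b(2) elim(2)] .
      then obtain n where n: "N \<le> n" "cell_prob n x \<le> 2 powr (- b * real n)"
        unfolding cells_often_below_def by blast
      with N[OF n(1)] have "x \<in> short_code_small_cell Z a b n"
        by (auto simp: short_code_small_cell_def divide_less_eq)
      with N[OF n(1)] show False by blast
    qed
  qed
qed

lemma metric_entropy_le_K_Z_point_AE:
  assumes Z: "compression_algorithm m Z"
  shows "AE x in M. ereal (metric_entropy M m A T) \<le> K_Z_point Z m A T x"
proof -
  let ?a = "\<lambda>k. metric_entropy M m A T - 1 / real (Suc k)"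
  have "AE x in M. ereal (?a k) \<le> K_Z_point Z m A T x" for k
  proof (cases "0 \<le> ?a k")
    case True
    then show ?thesis by (intro K_Z_point_lower_bound_AE Z) auto
  next
    case False
    then have "ereal (?a k) \<le> K_Z_point Z m A T x" for x
      using K_Z_nonneg[of Z "orbit x"] by (auto simp: K_Z_point_def intro: order_trans[of _ 0])
    then show ?thesis by simp
  qed
  then have "AE x in M. \<forall>k. ereal (?a k) \<le> K_Z_point Z m A T x"
    by (simp add: AE_all_countable)
  then show ?thesis
  proof eventually_elim
    case (elim x)
    have "(\<lambda>k. ereal (?a k)) \<longlonglongrightarrow> ereal (metric_entropy M m A T - 0)"
      by (intro tendsto_ereal tendsto_diff tendsto_const LIMSEQ_Suc[OF lim_const_over_n])
    then have "(\<lambda>k. ereal (?a k)) \<longlonglongrightarrow> ereal (metric_entropy M m A T)"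
      by simp
    then show ?case
      by (rule LIMSEQ_le_const2) (use elim in blast)
  qed
qed

end

theorem theorem14:
  fixes M :: "'a::metric_space measure" and T :: "'a \<Rightarrow> 'a"
    and m :: nat and A :: "nat \<Rightarrow> 'a set" and Z :: "nat list \<Rightarrow> bool list"
  assumes "compact (UNIV :: 'a set)"
    and "continuous_on UNIV T"
    and "sets M = sets borel"
    and "prob_space M"
    and "invariant_measure M T"
    and "ergodic M T"
    and "measurable_partition M m A"
    and "compression_algorithm m Z"
    and "coarsely_optimal m Z"
  shows "AE x in M. K_Z_point Z m A T x = ereal (metric_entropy M m A T)"
proof -
  have "space M = UNIV" using sets_eq_imp_space_eq[OF assms(3)] by simp
  then interpret ergodic_partition M T m A
    by (intro ergodic_partition.intro ergodic_transformation.intro ergodic_partition_axioms.intro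
        ergodic_transformation_axioms.intro assms(4-7))
  from K_Z_point_le_metric_entropy_AE[OF assms(9)] metric_entropy_le_K_Z_point_AE[OF assms(8)]
  show ?thesis by eventually_elim (rule antisym)
qed

end
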